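(* Let $N\ge 2$. For every $N$-player game $G$ and every player $i\in A$, $$R_i(G)\le (N-1)\sum_{j\in A,\,j\neq i}R_j(G).$$
   Context: Let $A=\{1,\dots,N\}$ be a finite set of players. A game is any function $G:2^A\to\mathbb{R}$ (no normalization such as $G(\emptyset)=0$ is assumed). For a player $i$ and a coalition $S\subseteq A\setminus\{i\}$, the marginal contribution is $d_iG(S)=G(S\cup\{i\})-G(S)$. Let $f_i$ be a random subset of $A\setminus\{i\}$ with distribution $\Pr\{f_i=S\}=\frac{|S|!\,(N-|S|-1)!}{N!}$ for each $S\subseteq A\setminus\{i\}$. The Shapley value of $G$ for player $i$ is $V_i(G)=\mathbf{E}[d_iG(f_i)]$ and the Shapley uncertainty of $G$ for player $i$ is $R_i(G)=\mathrm{Var}[d_iG(f_i)]$. *)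

theory Defs
  imports Complex_Main
begin

definition players :: "nat \<Rightarrow> nat set" where
  "players N = {1..N}"

definition marg :: "(nat set \<Rightarrow> real) \<Rightarrow> nat \<Rightarrow> nat set \<Rightarrow> real" where
  "marg G i S = G (S \<union> {i}) - G S"

definition shapley_weight :: "nat \<Rightarrow> nat set \<Rightarrow> real" where
  "shapley_weight N S = fact (card S) * fact (N - card S - 1) / fact N"

definition shapley_value :: "nat \<Rightarrow> (nat set \<Rightarrow> real) \<Rightarrow> nat \<Rightarrow> real" where
  "shapley_value N G i =
     (\<Sum>S\<in>Pow (players N - {i}). shapley_weight N S * marg G i S)"

definition shapley_uncertainty :: "nat \<Rightarrow> (nat set \<Rightarrow> real) \<Rightarrow> nat \<Rightarrow> real" where
  "shapley_uncertainty N G i =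
     (\<Sum>S\<in>Pow (players N - {i}).
        shapley_weight N S * (marg G i S - shapley_value N G i)^2)"

end

theory Submission
  imports Defs "HOL-Combinatorics.Multiset_Permutations" "HOL-Analysis.Convex"
begin

text \<open>The Shapley weights are the law of the set of predecessors of a player in a uniformly
random ordering of all players. Along any fixed ordering the marginal contributions of the
players telescope to G(A) - G({}), which is therefore also the sum of the Shapley values.
Hence the centred marginal contributions of all players sum to zero ordering by ordering,
so the deviation of player i is minus the sum of the deviations of the other N - 1 players,
and Cauchy-Schwarz bounds its square by N - 1 times their sum of squares. Averaging over
orderings gives the claim.\<close>

definition predecessors :: "'a \<Rightarrow> 'a list \<Rightarrow> 'a set" where
  "predecessors j xs = set (takeWhile (\<lambda>x. x \<noteq> j) xs)"

lemma predecessors_append_Cons: "j \<notin> set u \<Longrightarrow> predecessors j (u @ j # v) = set u"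
  unfolding predecessors_def by (induction u) auto

lemma predecessors_subset:
  "xs \<in> permutations_of_set A \<Longrightarrow> predecessors j xs \<subseteq> A - {j}"
  unfolding predecessors_def by (auto dest: permutations_of_setD set_takeWhileD)

lemma permutations_with_predecessors_eq_image:
  assumes "j \<in> A" and "S \<subseteq> A - {j}"
  shows "{xs \<in> permutations_of_set A. predecessors j xs = S}
           = (\<lambda>(u, v). u @ j # v) ` (permutations_of_set S \<times> permutations_of_set (A - S - {j}))"
    (is "?L = ?join ` ?D")
proof (intro equalityI subsetI)
  fix xs assume "xs \<in> ?L"
  then have xs: "set xs = A" "distinct xs" and pred: "predecessors j xs = S"
    by (auto dest: permutations_of_setD)
  obtain u v where uv: "xs = u @ j # v" "j \<notin> set u"
    using split_list_first \<open>j \<in> A\<close> xs(1) by metis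
  then have "set u = S" using pred by (simp add: predecessors_append_Cons)
  with xs uv have "(u, v) \<in> ?D" by auto
  with uv show "xs \<in> ?join ` ?D" by force
next
  fix xs assume "xs \<in> ?join ` ?D"
  then obtain u v where "xs = u @ j # v" and "set u = S" "distinct u"
    and "set v = A - S - {j}" "distinct v"
    by (auto simp: permutations_of_set_def)
  with assms show "xs \<in> ?L"
    by (auto simp: predecessors_append_Cons permutations_of_set_def)
qed

lemma card_permutations_with_predecessors:
  assumes "finite A" and "j \<in> A" and "S \<subseteq> A - {j}"
  shows "card {xs \<in> permutations_of_set A. predecessors j xs = S}
           = fact (card S) * fact (card A - card S - 1)"
proof -
  let ?join = "\<lambda>(u, v). u @ j # v"
  let ?D = "permutations_of_set S \<times> permutations_of_set (A - S - {j})"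
  have "inj_on ?join ?D"
  proof (rule inj_onI, clarify)
    fix u v u' v'
    assume "u \<in> permutations_of_set S" "v \<in> permutations_of_set (A - S - {j})"
      and "u @ j # v = u' @ j # v'"
    moreover have "j \<notin> set u" "j \<notin> set v"
      using calculation(1,2) assms(3) by (auto dest: permutations_of_setD)
    ultimately show "u = u' \<and> v = v'"
      by (simp add: append_Cons_eq_iff)
  qed
  moreover have "finite S" using assms finite_subset by blast
  moreover have "card (A - S - {j}) = card A - card S - 1"
  proof -
    have "A - S - {j} = A - insert j S" and "insert j S \<subseteq> A" using assms by auto
    moreover have "card (insert j S) = card S + 1"
      using \<open>finite S\<close> assms(3) by (subst card_insert_disjoint) auto
    ultimately show ?thesis using \<open>finite S\<close> by (simp add: card_Diff_subset)
  qed
  ultimately show ?thesis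
    using assms by (simp add: permutations_with_predecessors_eq_image card_image card_cartesian_product)
qed

lemma sum_shapley_weight_eq_average_permutations:
  fixes A :: "nat set" and h :: "nat set \<Rightarrow> real"
  assumes "finite A" and "j \<in> A"
  shows "(\<Sum>S\<in>Pow (A - {j}). shapley_weight (card A) S * h S)
           = (\<Sum>xs\<in>permutations_of_set A. h (predecessors j xs)) / fact (card A)"
proof -
  have "(\<Sum>xs\<in>permutations_of_set A. h (predecessors j xs))
      = (\<Sum>S\<in>Pow (A - {j}).
           \<Sum>xs\<in>{xs \<in> permutations_of_set A. predecessors j xs = S}. h (predecessors j xs))"
    using assms by (intro sum.group[symmetric]) (auto dest!: predecessors_subset)
  also have "\<dots> = (\<Sum>S\<in>Pow (A - {j}). fact (card S) * fact (card A - card S - 1) * h S)"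
    using card_permutations_with_predecessors[OF assms] by (intro sum.cong) auto
  finally show ?thesis
    by (simp add: shapley_weight_def sum_divide_distrib)
qed

lemma sum_marg_predecessors:
  "distinct xs \<Longrightarrow>
     (\<Sum>j\<in>set xs. marg G j (B \<union> predecessors j xs)) = G (B \<union> set xs) - G B"
proof (induction xs arbitrary: B)
  case Nil
  then show ?case by simp
next
  case (Cons x xs)
  have "predecessors j (x # xs) = insert x (predecessors j xs)" if "j \<in> set xs" for j
    using that Cons.prems unfolding predecessors_def by auto
  then have "(\<Sum>j\<in>set xs. marg G j (B \<union> predecessors j (x # xs)))
      = (\<Sum>j\<in>set xs. marg G j (insert x B \<union> predecessors j xs))"
    by (intro sum.cong) simp_all
  also have "\<dots> = G (insert x B \<union> set xs) - G (insert x B)"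
    using Cons.IH[of "insert x B"] Cons.prems by simp
  moreover have "marg G x (B \<union> predecessors x (x # xs)) = G (insert x B) - G B"
    by (simp add: predecessors_def marg_def)
  ultimately show ?case
    using Cons.prems by simp
qed

lemma shapley_value_eq_average_permutations:
  assumes "j \<in> players N"
  shows "shapley_value N G j
           = (\<Sum>xs\<in>permutations_of_set (players N). marg G j (predecessors j xs)) / fact N"
  using sum_shapley_weight_eq_average_permutations[of "players N" j "marg G j"] assms
  by (simp add: shapley_value_def players_def)

lemma shapley_uncertainty_eq_average_permutations:
  assumes "j \<in> players N"
  shows "shapley_uncertainty N G j
           = (\<Sum>xs\<in>permutations_of_set (players N).
                (marg G j (predecessors j xs) - shapley_value N G j)^2) / fact N"
  using sum_shapley_weight_eq_average_permutations
          [of "players N" j "\<lambda>S. (marg G j S - shapley_value N G j)^2"] assms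
  by (simp add: shapley_uncertainty_def players_def)

lemma sum_marg_predecessors_permutation:
  "xs \<in> permutations_of_set A \<Longrightarrow> (\<Sum>j\<in>A. marg G j (predecessors j xs)) = G A - G {}"
  using sum_marg_predecessors[of xs G "{}"] by (auto dest: permutations_of_setD)

lemma sum_shapley_value: "(\<Sum>j\<in>players N. shapley_value N G j) = G (players N) - G {}"
proof -
  let ?P = "permutations_of_set (players N)"
  have "(\<Sum>j\<in>players N. shapley_value N G j)
      = (\<Sum>xs\<in>?P. \<Sum>j\<in>players N. marg G j (predecessors j xs)) / fact N"
    by (simp add: shapley_value_eq_average_permutations sum_divide_distrib[symmetric]
        sum.swap[of _ "players N"])
  also have "\<dots> = G (players N) - G {}"
    by (simp add: sum_marg_predecessors_permutation players_def)
  finally show ?thesis .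
qed

lemma square_le_card_mult_sum_squares_if_sum_eq_0:
  fixes y :: "'a \<Rightarrow> real"
  assumes "finite A" and "i \<in> A" and "(\<Sum>j\<in>A. y j) = 0"
  shows "(y i)^2 \<le> real (card A - 1) * (\<Sum>j\<in>A - {i}. (y j)^2)"
proof -
  have "y i = - (\<Sum>j\<in>A - {i}. y j)"
    using assms by (simp add: sum.remove)
  then have "(y i)^2 = (\<Sum>j\<in>A - {i}. y j)^2" by simp
  also have "\<dots> \<le> (\<Sum>j\<in>A - {i}. (y j)^2) * card (A - {i})"
    by (rule sum_squared_le_sum_of_squares)
  finally show ?thesis
    using assms by (simp add: mult.commute)
qed

theorem mainTheorem5:
  fixes N :: nat and G :: "nat set \<Rightarrow> real" and i :: nat
  assumes "N \<ge> 2" and "i \<in> players N"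
  shows "shapley_uncertainty N G i
           \<le> real (N - 1) * (\<Sum>j\<in>players N - {i}. shapley_uncertainty N G j)"
proof -
  let ?A = "players N" and ?P = "permutations_of_set (players N)"
  define dev where "dev xs j = marg G j (predecessors j xs) - shapley_value N G j" for xs j
  have R: "shapley_uncertainty N G j = (\<Sum>xs\<in>?P. (dev xs j)^2) / fact N" if "j \<in> ?A" for j
    using that by (simp add: shapley_uncertainty_eq_average_permutations dev_def)
  have "(dev xs i)^2 \<le> real (N - 1) * (\<Sum>j\<in>?A - {i}. (dev xs j)^2)" if "xs \<in> ?P" for xs
  proof -
    have "(\<Sum>j\<in>?A. dev xs j) = 0"
      using that by (simp add: dev_def sum_subtractf sum_marg_predecessors_permutation
          sum_shapley_value)
    then show ?thesis
      using assms(2) square_le_card_mult_sum_squares_if_sum_eq_0[of ?A i "dev xs"]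
      by (simp add: players_def)
  qed
  then have "shapley_uncertainty N G i
      \<le> (\<Sum>xs\<in>?P. real (N - 1) * (\<Sum>j\<in>?A - {i}. (dev xs j)^2)) / fact N"
    using assms(2) by (simp add: R divide_right_mono sum_mono)
  also have "\<dots> = real (N - 1) * (\<Sum>j\<in>?A - {i}. shapley_uncertainty N G j)"
    by (simp add: R sum_distrib_left sum_divide_distrib sum.swap[of _ "?A - {i}"])
  finally show ?thesis .
qed

end
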